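(* Let $A$ be an abelian surface over a finite field $\mathbb{F}_q$ of characteristic $p$, with Frobenius characteristic polynomial $\chi_{A,q}(T) = T^4 + a_1 T^3 + a_2 T^2 + a_1 q T + q^2$. Let $\ell \neq p$ be a prime, let $r$ be the order of the Frobenius endomorphism $\varphi$ on $A[\ell]$, and assume $\gcd(\ell, r) = 1$. Then there exist $r$-th roots of unity $\zeta_1,\zeta_2 \in \overline{\mathbb{F}}_\ell$ with $\operatorname{lcm}(\operatorname{ord}(\zeta_1),\operatorname{ord}(\zeta_2)) = r$ if $r$ is odd, and $\operatorname{lcm}(\operatorname{ord}(\zeta_1),\operatorname{ord}(\zeta_2)) \in \{r, r/2\}$ if $r$ is even, such that, with $\eta_j = \zeta_j + \zeta_j^{-1} + 2$ ($j=1,2$), $$a_1^2 \equiv (\sqrt{\eta_1} \pm \sqrt{\eta_2})^2\, q \pmod{\ell} \quad\text{and}\quad (a_2 - 2q)^2 \equiv \eta_1 \eta_2 q^2 \pmod{\ell},$$ where the first congruence means that there exist square roots $u_1, u_2 \in \overline{\mathbb{F}}_\ell$ of $\eta_1, \eta_2$ respectively with $a_1^2 \equiv (u_1 + u_2)^2 q$.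
   Context: The order of $\varphi$ on $A[\ell]$ is defined as follows: via $A[\ell] \cong (\mathbb{Z}/\ell\mathbb{Z})^{4}$, the action of $\varphi$ on $A[\ell]$ is given by a matrix $F_\ell \in \operatorname{GL}_{4}(\mathbb{F}_\ell)$ (the reduction mod $\ell$ of the matrix of Frobenius on the Tate module), and $r$ is the smallest positive integer such that $F_\ell^r = \alpha I$ for some scalar $\alpha \in \mathbb{F}_\ell$, i.e. the order of $F_\ell$ in $\operatorname{PGL}_4(\mathbb{F}_\ell)$. Congruences between integers and elements of $\overline{\mathbb{F}}_\ell$ are understood after reducing the integers modulo $\ell$. *)

theory Defs
  imports "Jordan_Normal_Form.Char_Poly" "HOL-Computational_Algebra.Polynomial"
begin

definition frob_poly :: "int \<Rightarrow> int \<Rightarrow> int \<Rightarrow> int poly" where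
  "frob_poly q a1 a2 = [: q^2, a1 * q, a2, a1, 1 :]"

definition pgl_order :: "'a::field mat \<Rightarrow> nat" where
  "pgl_order F = (LEAST r. r > 0 \<and> (\<exists>\<alpha>. F ^\<^sub>m r = \<alpha> \<cdot>\<^sub>m 1\<^sub>m (dim_row F)))"

definition elt_ord :: "'a::field \<Rightarrow> nat" where
  "elt_ord x = (LEAST n. n > 0 \<and> x ^ n = 1)"

end

theory Submission
  imports Defs "HOL-Number_Theory.Residues"
begin

(* Over an algebraic closure, the characteristic polynomial splits as
   (T^2 - s1 T + q)(T^2 - s2 T + q) with s1 + s2 = -a1 and s1 s2 = a2 - 2q, so the eigenvalues pair
   up as alpha_j beta_j = q.  Put zeta_j = alpha_j / beta_j; then eta_j q = s_j^2, which turns both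
   congruences into identities between a1, a2 and s1, s2.  Since F^r is scalar, all eigenvalues have
   the same r-th power, hence zeta_j^r = 1 and L = lcm (ord zeta_1) (ord zeta_2) divides r.
   Conversely every eigenvalue gamma satisfies gamma^(2L) = q^L; as X^r - lambda has distinct roots
   when l does not divide r, F is diagonalisable over the closure, so F^(2L) is scalar and r <= 2L. *)

lemma CHAR_eq_card_prime:
  assumes "prime l" "card (UNIV :: 'f::field set) = l"
  shows "CHAR('f) = l"
proof -
  have "CHAR('f) dvd l" using CHAR_dvd_CARD[where 'a='f] assms by simp
  moreover have "CHAR('f) \<noteq> 1" by simp
  ultimately show ?thesis using assms(1) unfolding prime_nat_iff by blast
qed

lemma prime_field_of_nat_surj:
  assumes "prime l" "card (UNIV :: 'f::field set) = l"
  shows "\<exists>m. of_nat m = (x::'f)"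
proof -
  have char: "CHAR('f) = l" by (rule CHAR_eq_card_prime[OF assms])
  have "finite (UNIV :: 'f set)" using assms prime_gt_0_nat card_ge_0_finite by metis
  moreover have "inj_on (of_nat :: nat \<Rightarrow> 'f) {..<l}"
    by (rule inj_onI) (simp add: of_nat_eq_iff_cong_CHAR char cong_def)
  ultimately have "(of_nat :: nat \<Rightarrow> 'f) ` {..<l} = UNIV"
    using assms(2) by (intro card_subset_eq) (auto simp: card_image)
  then show ?thesis by (metis UNIV_I imageE)
qed

definition prime_field_embedding :: "'f::field \<Rightarrow> 'k::field" where
  "prime_field_embedding x = of_nat (LEAST m. of_nat m = x)"

lemma prime_field_embedding_of_nat:
  assumes "prime l" "card (UNIV :: 'f::field set) = l" "CHAR('k::field) = l"
  shows "(prime_field_embedding (of_nat m :: 'f) :: 'k) = of_nat m"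
proof -
  have char: "CHAR('f) = l" by (rule CHAR_eq_card_prime[OF assms(1,2)])
  let ?m = "LEAST m'. (of_nat m' :: 'f) = of_nat m"
  have "(of_nat ?m :: 'f) = of_nat m" by (rule LeastI[of _ m]) simp
  then have "(of_nat ?m :: 'k) = of_nat m" by (simp add: of_nat_eq_iff_cong_CHAR char assms(3))
  then show ?thesis unfolding prime_field_embedding_def .
qed

lemma field_hom_prime_field_embedding:
  assumes "prime l" "card (UNIV :: 'f::field set) = l" "CHAR('k::field) = l"
  shows "field_hom (prime_field_embedding :: 'f \<Rightarrow> 'k)"
proof
  note surj = prime_field_of_nat_surj[OF assms(1,2)]
  note hom = prime_field_embedding_of_nat[OF assms]
  fix x y :: 'f
  obtain a b where ab: "x = of_nat a" "y = of_nat b" using surj by metis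
  show "(prime_field_embedding (x + y) :: 'k) = prime_field_embedding x + prime_field_embedding y"
    unfolding ab of_nat_add[symmetric] hom by simp
  show "(prime_field_embedding (x * y) :: 'k) = prime_field_embedding x * prime_field_embedding y"
    unfolding ab of_nat_mult[symmetric] hom by simp
next
  show "(prime_field_embedding (1::'f) :: 'k) = 1"
    using prime_field_embedding_of_nat[OF assms, of 1] by simp
  show "(prime_field_embedding (0::'f) :: 'k) = 0"
    using prime_field_embedding_of_nat[OF assms, of 0] by simp
qed

text \<open>\<open>poly_mat_vec M p v\<close> is \<open>p(M) v\<close>, computed by Horner's scheme.\<close>
definition poly_mat_vec :: "'a::field mat \<Rightarrow> 'a poly \<Rightarrow> 'a vec \<Rightarrow> 'a vec" where
  "poly_mat_vec M p v = fold_coeffs (\<lambda>a w. a \<cdot>\<^sub>v v + M *\<^sub>v w) p (0\<^sub>v (dim_row M))"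

context
  fixes M :: "'a::field mat" and n :: nat
  assumes M: "M \<in> carrier_mat n n"
begin

lemma mult_mat_zero_vec [simp]: "M *\<^sub>v 0\<^sub>v n = 0\<^sub>v n"
  using M by (intro eq_vecI) (auto simp: scalar_prod_def)

lemma poly_mat_vec_0 [simp]: "poly_mat_vec M 0 v = 0\<^sub>v n"
  using M unfolding poly_mat_vec_def by simp

lemma poly_mat_vec_pCons:
  assumes v: "v \<in> carrier_vec n"
  shows "poly_mat_vec M (pCons a p) v = a \<cdot>\<^sub>v v + M *\<^sub>v poly_mat_vec M p v"
  using M v by (cases "a = 0 \<and> p = 0") (auto simp: poly_mat_vec_def)

lemma poly_mat_vec_carrier [simp]:
  "v \<in> carrier_vec n \<Longrightarrow> poly_mat_vec M p v \<in> carrier_vec n"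
  by (induct p) (use M in \<open>auto simp: poly_mat_vec_pCons\<close>)

lemma poly_mat_vec_const: "v \<in> carrier_vec n \<Longrightarrow> poly_mat_vec M [:c:] v = c \<cdot>\<^sub>v v"
  using M by (auto simp: poly_mat_vec_pCons)

lemma poly_mat_vec_zero_vec [simp]: "poly_mat_vec M p (0\<^sub>v n) = 0\<^sub>v n"
  by (induct p) (use M in \<open>auto simp: poly_mat_vec_pCons\<close>)

lemma poly_mat_vec_add:
  assumes v: "v \<in> carrier_vec n"
  shows "poly_mat_vec M (p + q) v = poly_mat_vec M p v + poly_mat_vec M q v"
proof (induct p q rule: poly_induct2)
  case (pCons a p b q)
  then show ?case
    using M v by (simp add: poly_mat_vec_pCons mult_add_distrib_mat_vec[OF M] add_smult_distrib_vec)
      (intro eq_vecI, auto simp: algebra_simps)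
qed (use M in simp)

lemma poly_mat_vec_smult:
  assumes v: "v \<in> carrier_vec n"
  shows "poly_mat_vec M (Polynomial.smult c p) v = c \<cdot>\<^sub>v poly_mat_vec M p v"
proof (induct p)
  case (pCons a p)
  then show ?case
    using M v by (simp add: poly_mat_vec_pCons mult_mat_vec[OF M] smult_add_distrib_vec[of _ n]
        smult_smult_assoc)
qed (use M in \<open>auto\<close>)

lemma poly_mat_vec_mult:
  assumes v: "v \<in> carrier_vec n"
  shows "poly_mat_vec M (p * q) v = poly_mat_vec M p (poly_mat_vec M q v)"
proof (induct p)
  case (pCons a p)
  have "pCons a p * q = Polynomial.smult a q + pCons 0 (p * q)" by simp
  then show ?case
    using M v pCons by (simp add: poly_mat_vec_add poly_mat_vec_smult poly_mat_vec_pCons)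
      (intro eq_vecI, auto)
qed (use M in simp)

lemma poly_mat_vec_diff:
  assumes v: "v \<in> carrier_vec n"
  shows "poly_mat_vec M (p - q) v = poly_mat_vec M p v - poly_mat_vec M q v"
proof -
  have "poly_mat_vec M (p - q) v = poly_mat_vec M p v + (-1) \<cdot>\<^sub>v poly_mat_vec M q v"
    using v by (simp flip: poly_mat_vec_smult poly_mat_vec_add)
  also have "\<dots> = poly_mat_vec M p v - poly_mat_vec M q v" using v by (intro eq_vecI) auto
  finally show ?thesis .
qed

lemma poly_mat_vec_X_power:
  "v \<in> carrier_vec n \<Longrightarrow> poly_mat_vec M ([:0, 1:] ^ k) v = (M ^\<^sub>m k) *\<^sub>v v"
proof (induct k arbitrary: v)
  case 0
  then show ?case using M by (simp add: one_pCons poly_mat_vec_const)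
next
  case (Suc k)
  have "poly_mat_vec M [:0, 1:] v = M *\<^sub>v v"
    using M Suc.prems by (intro eq_vecI) (auto simp: poly_mat_vec_pCons poly_mat_vec_const)
  then have "poly_mat_vec M ([:0, 1:] ^ Suc k) v = (M ^\<^sub>m k) *\<^sub>v (M *\<^sub>v v)"
    using M Suc by (simp only: power_Suc2 poly_mat_vec_mult) simp
  also have "\<dots> = (M ^\<^sub>m Suc k) *\<^sub>v v"
    using M Suc.prems by (simp add: assoc_mult_mat_vec[of _ n n _ n])
  finally show ?case .
qed

lemma poly_mat_vec_linear:
  "v \<in> carrier_vec n \<Longrightarrow> poly_mat_vec M [:- c, 1:] v = M *\<^sub>v v - c \<cdot>\<^sub>v v"
  using M by (intro eq_vecI) (auto simp: poly_mat_vec_pCons poly_mat_vec_const)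

end

lemma smult_one_mat_mult_vec:
  "(v :: 'a::comm_ring_1 vec) \<in> carrier_vec n \<Longrightarrow> (a \<cdot>\<^sub>m 1\<^sub>m n) *\<^sub>v v = a \<cdot>\<^sub>v v"
  by (intro eq_vecI) auto

lemma eq_mat_if_mult_vec_eq:
  fixes A B :: "'a::comm_ring_1 mat"
  assumes A: "A \<in> carrier_mat n n" and B: "B \<in> carrier_mat n n"
    and eq: "\<And>v. v \<in> carrier_vec n \<Longrightarrow> A *\<^sub>v v = B *\<^sub>v v"
  shows "A = B"
proof (rule eq_matI)
  fix i j assume "i < dim_row B" "j < dim_col B"
  then show "A $$ (i, j) = B $$ (i, j)"
  proof -
    have "A $$ (i, j) = (A *\<^sub>v unit_vec n j) $ i" using A B \<open>i < dim_row B\<close> \<open>j < dim_col B\<close> by simp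
    also have "\<dots> = (B *\<^sub>v unit_vec n j) $ i" using eq[of "unit_vec n j"] by simp
    also have "\<dots> = B $$ (i, j)" using B \<open>i < dim_row B\<close> \<open>j < dim_col B\<close> by simp
    finally show ?thesis .
  qed
qed (use A B in auto)

lemma smult_vec_eq_0_iff:
  "(v :: 'a::field vec) \<in> carrier_vec n \<Longrightarrow> a \<cdot>\<^sub>v v = 0\<^sub>v n \<longleftrightarrow> a = 0 \<or> v = 0\<^sub>v n"
  by (auto simp: vec_eq_iff)

lemma poly_mat_vec_linear_eq_0_imp_eq_0:
  fixes M :: "'a::field mat"
  assumes M: "M \<in> carrier_mat n n" and "\<not> eigenvalue M c"
    and u: "u \<in> carrier_vec n" and "poly_mat_vec M [:- c, 1:] u = 0\<^sub>v n"
  shows "u = 0\<^sub>v n"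
proof (rule ccontr)
  assume "u \<noteq> 0\<^sub>v n"
  have "M *\<^sub>v u = c \<cdot>\<^sub>v u"
  proof (rule eq_vecI)
    fix i assume "i < dim_vec (c \<cdot>\<^sub>v u)"
    then show "(M *\<^sub>v u) $ i = (c \<cdot>\<^sub>v u) $ i"
      using assms poly_mat_vec_linear[OF M u] arg_cong[of _ _ "\<lambda>x. x $ i"] by fastforce
  qed (use M u in simp)
  then have "eigenvalue M c"
    using M u \<open>u \<noteq> 0\<^sub>v n\<close> unfolding eigenvalue_def eigenvector_def by auto
  with assms show False by simp
qed

lemma rsquarefree_mult_order:
  assumes "rsquarefree (p * q)"
  shows "p * q \<noteq> 0" "Polynomial.order a p + Polynomial.order a q \<le> 1"
proof -
  show nz: "p * q \<noteq> 0" using assms by (simp add: rsquarefree_def)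
  have "Polynomial.order a (p * q) = 0 \<or> Polynomial.order a (p * q) = 1"
    using assms by (simp add: rsquarefree_def)
  then show "Polynomial.order a p + Polynomial.order a q \<le> 1" using order_mult[OF nz] by auto
qed

lemma rsquarefree_mult_right:
  assumes "rsquarefree (p * q)" shows "rsquarefree q"
  unfolding rsquarefree_def
proof (intro conjI allI)
  show "q \<noteq> 0" using rsquarefree_mult_order(1)[OF assms] by auto
  fix a show "Polynomial.order a q = 0 \<or> Polynomial.order a q = 1"
    using rsquarefree_mult_order(2)[OF assms, of a] by linarith
qed

lemma rsquarefree_mult_no_common_root:
  assumes "rsquarefree (p * q)" "poly p a = 0" shows "poly q a \<noteq> 0"
proof -
  have "p * q \<noteq> 0" "Polynomial.order a p + Polynomial.order a q \<le> 1"
    using rsquarefree_mult_order[OF assms(1)] by auto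
  moreover have "Polynomial.order a p \<noteq> 0" using assms(2) \<open>p * q \<noteq> 0\<close> by (auto simp: order_root)
  ultimately show ?thesis by (auto simp: order_root)
qed

lemma poly_mat_vec_eq_0_if_prod_linear_eq_0:
  fixes M :: "'a::field mat"
  assumes M: "M \<in> carrier_mat n n"
  shows "rsquarefree (\<Prod>c\<in>#A. [:- c, 1:]) \<Longrightarrow>
    (\<And>c. c \<in># A \<Longrightarrow> eigenvalue M c \<Longrightarrow> poly h c = 0) \<Longrightarrow>
    v \<in> carrier_vec n \<Longrightarrow> poly_mat_vec M (\<Prod>c\<in>#A. [:- c, 1:]) v = 0\<^sub>v n \<Longrightarrow>
    poly_mat_vec M h v = 0\<^sub>v n"
proof (induct A arbitrary: h v)
  case empty
  then show ?case using M by (simp add: one_pCons poly_mat_vec_const)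
next
  case (add c A)
  let ?P = "\<Prod>c\<in>#A. [:- c, 1:]"
  have sqf': "rsquarefree ([:- c, 1:] * ?P)" using add.prems(1) by simp
  then have sqf: "rsquarefree ?P" by (rule rsquarefree_mult_right)
  from sqf' have c_notin: "poly ?P c \<noteq> 0" by (rule rsquarefree_mult_no_common_root) simp
  have P_lin: "poly_mat_vec M ?P (poly_mat_vec M [:- c, 1:] v) = 0\<^sub>v n"
    using add.prems(3,4) M by (simp flip: poly_mat_vec_mult add: mult.commute)
  show ?case
  proof (cases "eigenvalue M c")
    case True
    then have "[:- c, 1:] dvd h" using add.prems(2) by (simp add: poly_eq_0_iff_dvd)
    then obtain h' where h: "h = [:- c, 1:] * h'" by (elim dvdE)
    have "poly_mat_vec M h' (poly_mat_vec M [:- c, 1:] v) = 0\<^sub>v n"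
    proof (rule add.hyps[OF sqf _ _ P_lin])
      fix b assume "b \<in># A" "eigenvalue M b"
      moreover from \<open>b \<in># A\<close> have "b \<noteq> c" using c_notin by (auto simp: poly_prod_mset)
      ultimately show "poly h' b = 0" using add.prems(2)[of b] h by simp
    qed (use M add.prems(3) in simp)
    then show ?thesis
      using M add.prems(3) unfolding h mult.commute[of "[:- c, 1:]"]
      by (simp only: poly_mat_vec_mult)
  next
    case False
    have "poly_mat_vec M [:- c, 1:] (poly_mat_vec M ?P v) = 0\<^sub>v n"
      using add.prems(3,4) M by (simp flip: poly_mat_vec_mult)
    then have "poly_mat_vec M ?P v = 0\<^sub>v n"
      using poly_mat_vec_linear_eq_0_imp_eq_0[OF M False] M add.prems(3) by simp
    then show ?thesis using add.hyps[OF sqf _ add.prems(3)] add.prems(2) by simp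
  qed
qed

text \<open>A polynomial without repeated roots annihilating \<open>M\<close> makes \<open>M\<close> diagonalisable; in this
  form: every polynomial vanishing on the eigenvalues of \<open>M\<close> annihilates \<open>M\<close>.\<close>
lemma poly_mat_vec_eq_0_if_vanishes_on_eigenvalues:
  fixes M :: "'a::alg_closed_field mat"
  assumes M: "M \<in> carrier_mat n n" and sqf: "rsquarefree p"
    and ann: "\<And>w. w \<in> carrier_vec n \<Longrightarrow> poly_mat_vec M p w = 0\<^sub>v n"
    and h: "\<And>c. eigenvalue M c \<Longrightarrow> poly h c = 0"
    and v: "v \<in> carrier_vec n"
  shows "poly_mat_vec M h v = 0\<^sub>v n"
proof -
  have "p \<noteq> 0" using sqf by (simp add: rsquarefree_def)
  then obtain A where A: "p = Polynomial.smult (lead_coeff p) (\<Prod>c\<in>#A. [:- c, 1:])"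
    using alg_closed_imp_factorization by blast
  have "rsquarefree (\<Prod>c\<in>#A. [:- c, 1:])"
    using sqf \<open>p \<noteq> 0\<close> by (subst (asm) A) (simp add: rsquarefree_def order_smult)
  moreover have "poly_mat_vec M (\<Prod>c\<in>#A. [:- c, 1:]) v = 0\<^sub>v n"
    using ann[OF v] \<open>p \<noteq> 0\<close> M v by (subst (asm) A) (simp add: poly_mat_vec_smult smult_vec_eq_0_iff)
  ultimately show ?thesis using poly_mat_vec_eq_0_if_prod_linear_eq_0[OF M _ _ v] h by blast
qed

lemma rsquarefree_if_no_common_root_pderiv:
  fixes p :: "'a::field poly"
  assumes "p \<noteq> 0" and "\<And>a. poly p a = 0 \<Longrightarrow> poly (pderiv p) a \<noteq> 0"
  shows "rsquarefree p"
  unfolding rsquarefree_def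
proof (intro conjI allI \<open>p \<noteq> 0\<close>)
  fix a show "Polynomial.order a p = 0 \<or> Polynomial.order a p = 1"
  proof (rule ccontr)
    assume "\<not> (Polynomial.order a p = 0 \<or> Polynomial.order a p = 1)"
    then have "[:- a, 1:] ^ Suc 1 dvd p" unfolding order_divides by simp
    then obtain t where p: "p = [:- a, 1:] ^ Suc 1 * t" by (elim dvdE)
    have "poly p a = 0" "poly (pderiv p) a = 0" unfolding p lemma_order_pderiv1 by simp_all
    with assms(2) show False by blast
  qed
qed

lemma rsquarefree_X_power_minus_const:
  fixes c :: "'a::field"
  assumes "of_nat r \<noteq> (0 :: 'a)" "c \<noteq> 0"
  shows "rsquarefree ([:0, 1:] ^ r - [:c:])"
proof -
  obtain r' where r: "r = Suc r'" using assms(1) by (cases r) auto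
  have deriv: "pderiv ([:0, 1:] ^ r - [:c:]) = Polynomial.smult (of_nat r) ([:0, 1:] ^ r')"
    unfolding r pderiv_diff pderiv_power_Suc by (simp add: pderiv_pCons)
  show ?thesis
  proof (rule rsquarefree_if_no_common_root_pderiv)
    have "poly ([:0, 1:] ^ r - [:c:]) 0 \<noteq> 0" using assms(2) by (simp add: r)
    then show "[:0, 1:] ^ r - [:c:] \<noteq> 0" by (metis poly_0)
    fix a assume "poly ([:0, 1:] ^ r - [:c:]) a = 0"
    then have "a ^ r = c" by simp
    then show "poly (pderiv ([:0, 1:] ^ r - [:c:])) a \<noteq> 0"
      using assms unfolding deriv by (auto simp: r)
  qed
qed

lemma mat_power_scalar_if_eigenvalue_powers:
  fixes M :: "'a::alg_closed_field mat"
  assumes M: "M \<in> carrier_mat n n" and r: "of_nat r \<noteq> (0 :: 'a)"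
    and Mr: "M ^\<^sub>m r = c \<cdot>\<^sub>m 1\<^sub>m n" and "c \<noteq> 0"
    and ev: "\<And>\<gamma>. eigenvalue M \<gamma> \<Longrightarrow> \<gamma> ^ m = d"
  shows "M ^\<^sub>m m = d \<cdot>\<^sub>m 1\<^sub>m n"
proof (rule eq_mat_if_mult_vec_eq)
  fix v :: "'a vec" assume v: "v \<in> carrier_vec n"
  have "poly_mat_vec M ([:0, 1:] ^ m - [:d:]) v = 0\<^sub>v n"
  proof (rule poly_mat_vec_eq_0_if_vanishes_on_eigenvalues[OF M _ _ _ v])
    show "rsquarefree ([:0, 1:] ^ r - [:c:])"
      by (rule rsquarefree_X_power_minus_const[OF r \<open>c \<noteq> 0\<close>])
    show "poly_mat_vec M ([:0, 1:] ^ r - [:c:]) w = 0\<^sub>v n" if "w \<in> carrier_vec n" for w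
      using M that by (simp add: poly_mat_vec_diff poly_mat_vec_X_power poly_mat_vec_const Mr
          smult_one_mat_mult_vec)
    show "poly ([:0, 1:] ^ m - [:d:]) \<gamma> = 0" if "eigenvalue M \<gamma>" for \<gamma>
      using ev[OF that] by simp
  qed
  then show "M ^\<^sub>m m *\<^sub>v v = (d \<cdot>\<^sub>m 1\<^sub>m n) *\<^sub>v v"
    using M v by (simp add: poly_mat_vec_diff poly_mat_vec_X_power poly_mat_vec_const
        smult_one_mat_mult_vec vec_eq_iff)
qed (use M in auto)

lemma finite_carrier_mat: "finite (carrier_mat n m :: 'a::finite mat set)"
proof -
  let ?I = "{..<n} \<times> {..<m}"
  have "carrier_mat n m \<subseteq> (\<lambda>f. mat n m f) ` (PiE ?I (\<lambda>_. UNIV :: 'a set))"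
  proof
    fix A :: "'a mat" assume A: "A \<in> carrier_mat n m"
    then have "A = mat n m (restrict (\<lambda>ij. A $$ ij) ?I)" by (intro eq_matI) auto
    moreover have "restrict (\<lambda>ij. A $$ ij) ?I \<in> PiE ?I (\<lambda>_. UNIV)" by simp
    ultimately show "A \<in> (\<lambda>f. mat n m f) ` (PiE ?I (\<lambda>_. UNIV))" by (rule image_eqI)
  qed
  moreover have "finite (PiE ?I (\<lambda>_. UNIV :: 'a set))" by (simp add: finite_PiE)
  ultimately show ?thesis by (metis finite_imageI finite_subset)
qed

text \<open>The invertible matrices over a finite field form a finite group, so every one of them has
  finite order.\<close>
lemma mat_power_eq_one_if_det_ne_0:
  fixes F :: "'a::{field,finite} mat"
  assumes F: "F \<in> carrier_mat n n" and "det F \<noteq> 0"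
  obtains d where "d > 0" "F ^\<^sub>m d = 1\<^sub>m n"
proof -
  let ?R = "ring_mat TYPE('a) n ()"
  interpret R: ring ?R by (rule ring_mat)
  interpret U: group "units_of ?R" by (rule R.units_group)
  have F_unit: "F \<in> Units ?R" by (rule det_non_zero_imp_unit[OF F \<open>det F \<noteq> 0\<close>])
  have "Units ?R \<subseteq> carrier_mat n n"
  proof
    fix X assume "X \<in> Units ?R"
    then have "X \<in> carrier ?R" by (rule R.Units_closed)
    then show "X \<in> carrier_mat n n" by (simp add: ring_mat_simps)
  qed
  then have fin: "finite (carrier (units_of ?R))"
    unfolding units_of_carrier using finite_carrier_mat by (rule finite_subset)
  have F_U: "F \<in> carrier (units_of ?R)" using F_unit by (simp add: units_of_carrier)
  define d where "d = U.ord F"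
  have "d \<ge> 1" unfolding d_def by (rule U.ord_ge_1[OF fin F_U])
  moreover have "F [^]\<^bsub>units_of ?R\<^esub> d = \<one>\<^bsub>units_of ?R\<^esub>"
    unfolding d_def by (rule U.pow_ord_eq_1[OF F_U])
  then have "F [^]\<^bsub>?R\<^esub> d = \<one>\<^bsub>?R\<^esub>" by (simp add: units_of_one R.units_of_pow[OF F_unit])
  then have "F ^\<^sub>m d = 1\<^sub>m n" by (simp add: pow_mat_ring_pow[OF F, where b = "()"] ring_mat_simps)
  ultimately show ?thesis by (intro that) auto
qed

lemma det_ne_0_if_char_poly_0_ne_0:
  fixes A :: "'a::field mat"
  assumes A: "A \<in> carrier_mat n n" and "poly (char_poly A) 0 \<noteq> 0"
  shows "det A \<noteq> 0"
proof
  assume "det A = 0"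
  then obtain v where "v \<in> carrier_vec n" "v \<noteq> 0\<^sub>v n" "A *\<^sub>v v = 0\<^sub>v n"
    unfolding det_0_iff_vec_prod_zero[OF A] by blast
  then have "eigenvector A v 0" using A unfolding eigenvector_def by auto
  then have "eigenvalue A 0" unfolding eigenvalue_def by blast
  with assms show False by (simp add: eigenvalue_root_char_poly[OF A])
qed

lemma eigenvalue_pow_eq_if_mat_power_scalar:
  fixes M :: "'a::field mat"
  assumes M: "M \<in> carrier_mat n n" and Mr: "M ^\<^sub>m r = c \<cdot>\<^sub>m 1\<^sub>m n" and "eigenvalue M \<gamma>"
  shows "\<gamma> ^ r = c"
proof -
  obtain v where v: "eigenvector M v \<gamma>" using \<open>eigenvalue M \<gamma>\<close> unfolding eigenvalue_def by blast
  then have v_carrier: "v \<in> carrier_vec n" "v \<noteq> 0\<^sub>v n" using M unfolding eigenvector_def by auto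
  have "\<gamma> ^ r \<cdot>\<^sub>v v = (M ^\<^sub>m r) *\<^sub>v v" by (rule eigenvector_pow[OF M v, symmetric])
  also have "\<dots> = c \<cdot>\<^sub>v v" unfolding Mr by (rule smult_one_mat_mult_vec[OF v_carrier(1)])
  finally have "\<gamma> ^ r \<cdot>\<^sub>v v = c \<cdot>\<^sub>v v" .
  then have "(\<gamma> ^ r - c) \<cdot>\<^sub>v v = 0\<^sub>v n"
    using v_carrier(1) by (auto simp: vec_eq_iff algebra_simps)
  then show ?thesis using v_carrier by (simp add: smult_vec_eq_0_iff)
qed

lemma pgl_order_carrier_mat:
  "F \<in> carrier_mat n n \<Longrightarrow> pgl_order F = (LEAST r. r > 0 \<and> (\<exists>\<alpha>. F ^\<^sub>m r = \<alpha> \<cdot>\<^sub>m 1\<^sub>m n))"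
  by (simp add: pgl_order_def)

lemma pgl_order_pos_scalar:
  assumes F: "F \<in> carrier_mat n n" and "k > 0" and "F ^\<^sub>m k = c \<cdot>\<^sub>m 1\<^sub>m n"
  shows "pgl_order F > 0" "\<exists>\<alpha>. F ^\<^sub>m pgl_order F = \<alpha> \<cdot>\<^sub>m 1\<^sub>m n"
proof -
  let ?P = "\<lambda>r. r > 0 \<and> (\<exists>\<alpha>. F ^\<^sub>m r = \<alpha> \<cdot>\<^sub>m 1\<^sub>m n)"
  have "?P k" using assms(2,3) by blast
  then have "?P (Least ?P)" by (rule LeastI)
  then show "pgl_order F > 0" "\<exists>\<alpha>. F ^\<^sub>m pgl_order F = \<alpha> \<cdot>\<^sub>m 1\<^sub>m n"
    unfolding pgl_order_carrier_mat[OF F] by blast+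
qed

lemma pgl_order_le:
  assumes F: "F \<in> carrier_mat n n" and "k > 0" and "F ^\<^sub>m k = c \<cdot>\<^sub>m 1\<^sub>m n"
  shows "pgl_order F \<le> k"
  unfolding pgl_order_carrier_mat[OF F] using assms(2,3) by (blast intro: Least_le)

lemma (in field_hom) pgl_order_map_mat:
  assumes F: "F \<in> carrier_mat n n"
  shows "pgl_order (map_mat hom F) = pgl_order F"
proof -
  have "(\<exists>\<beta>. map_mat hom F ^\<^sub>m k = \<beta> \<cdot>\<^sub>m 1\<^sub>m n) \<longleftrightarrow> (\<exists>\<alpha>. F ^\<^sub>m k = \<alpha> \<cdot>\<^sub>m 1\<^sub>m n)" for k
  proof
    assume "\<exists>\<beta>. map_mat hom F ^\<^sub>m k = \<beta> \<cdot>\<^sub>m 1\<^sub>m n"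
    then obtain \<beta> where \<beta>: "map_mat hom (F ^\<^sub>m k) = \<beta> \<cdot>\<^sub>m 1\<^sub>m n"
      using mat_hom_pow[OF F] by metis
    show "\<exists>\<alpha>. F ^\<^sub>m k = \<alpha> \<cdot>\<^sub>m 1\<^sub>m n"
    proof (cases "n = 0")
      case True
      then show ?thesis using F by (auto intro!: exI[of _ 0])
    next
      case False
      define \<alpha> where "\<alpha> = (F ^\<^sub>m k) $$ (0, 0)"
      have "hom \<alpha> = \<beta>" using arg_cong[OF \<beta>, of "\<lambda>A. A $$ (0, 0)"] False F by (simp add: \<alpha>_def)
      then have "map_mat hom (F ^\<^sub>m k) = map_mat hom (\<alpha> \<cdot>\<^sub>m 1\<^sub>m n)"
        using \<beta> F by (intro eq_matI) (auto simp: hom_mult)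
      then show ?thesis by (blast dest: mat_hom_inj)
    qed
  next
    assume "\<exists>\<alpha>. F ^\<^sub>m k = \<alpha> \<cdot>\<^sub>m 1\<^sub>m n"
    then obtain \<alpha> where "F ^\<^sub>m k = \<alpha> \<cdot>\<^sub>m 1\<^sub>m n" by blast
    then have "map_mat hom F ^\<^sub>m k = map_mat hom (\<alpha> \<cdot>\<^sub>m 1\<^sub>m n)"
      unfolding mat_hom_pow[OF F, symmetric] by simp
    also have "\<dots> = hom \<alpha> \<cdot>\<^sub>m 1\<^sub>m n" by (intro eq_matI) (auto simp: hom_mult)
    finally show "\<exists>\<beta>. map_mat hom F ^\<^sub>m k = \<beta> \<cdot>\<^sub>m 1\<^sub>m n" by blast
  qed
  moreover have "map_mat hom F \<in> carrier_mat n n" using F by simp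
  ultimately show ?thesis by (simp add: pgl_order_carrier_mat[OF F] pgl_order_carrier_mat)
qed

lemma elt_ord_pos_pow:
  fixes x :: "'a::field"
  assumes "x ^ m = 1" "m > 0"
  shows "elt_ord x > 0" "x ^ elt_ord x = 1"
proof -
  let ?P = "\<lambda>n. n > 0 \<and> x ^ n = 1"
  have "?P m" using assms by blast
  then have "?P (Least ?P)" by (rule LeastI)
  then show "elt_ord x > 0" "x ^ elt_ord x = 1" unfolding elt_ord_def by blast+
qed

lemma pow_eq_1_iff_elt_ord_dvd:
  fixes x :: "'a::field"
  assumes "x ^ m = 1" "m > 0"
  shows "x ^ k = 1 \<longleftrightarrow> elt_ord x dvd k"
proof
  let ?e = "elt_ord x"
  note e = elt_ord_pos_pow[OF assms]
  assume k: "x ^ k = 1"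
  have "x ^ k = x ^ (?e * (k div ?e)) * x ^ (k mod ?e)" by (simp flip: power_add)
  also have "x ^ (?e * (k div ?e)) = 1" by (simp add: power_mult e(2))
  finally have "x ^ (k mod ?e) = 1" using k by simp
  moreover have "k mod ?e < ?e" using e(1) by simp
  ultimately have "\<not> 0 < k mod ?e"
    using not_less_Least[of "k mod ?e" "\<lambda>n. n > 0 \<and> x ^ n = 1"] unfolding elt_ord_def by auto
  then show "elt_ord x dvd k" by (simp add: dvd_eq_mod_eq_0)
next
  assume "elt_ord x dvd k"
  then obtain t where "k = elt_ord x * t" by (elim dvdE)
  then show "x ^ k = 1" using elt_ord_pos_pow(2)[OF assms] by (simp add: power_mult)
qed

lemma eigenvalue_ratio_pow_pgl_order:
  fixes M :: "'a::field mat"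
  assumes M: "M \<in> carrier_mat n n" and "k > 0" "M ^\<^sub>m k = c \<cdot>\<^sub>m 1\<^sub>m n"
    and "eigenvalue M \<alpha>" "eigenvalue M \<beta>" "\<beta> \<noteq> 0"
  shows "(\<alpha> / \<beta>) ^ pgl_order M = 1"
proof -
  obtain \<kappa> where "M ^\<^sub>m pgl_order M = \<kappa> \<cdot>\<^sub>m 1\<^sub>m n"
    using pgl_order_pos_scalar[OF assms(1-3)] by blast
  then have "\<alpha> ^ pgl_order M = \<kappa>" "\<beta> ^ pgl_order M = \<kappa>"
    using eigenvalue_pow_eq_if_mat_power_scalar[OF M] assms(4,5) by blast+
  moreover have "\<beta> ^ pgl_order M \<noteq> 0" using \<open>\<beta> \<noteq> 0\<close> by simp
  ultimately show ?thesis by (simp add: power_divide)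
qed

lemma double_power_eq_prod_power:
  fixes \<alpha> \<beta> :: "'a::field"
  assumes "\<beta> \<noteq> 0" and "(\<alpha> / \<beta>) ^ L = 1"
  shows "\<alpha> ^ (2 * L) = (\<alpha> * \<beta>) ^ L" "\<beta> ^ (2 * L) = (\<alpha> * \<beta>) ^ L"
proof -
  have "\<alpha> ^ 2 = (\<alpha> / \<beta>) * (\<alpha> * \<beta>)" "(\<alpha> * \<beta>) = \<beta> ^ 2 * (\<alpha> / \<beta>)"
    using assms(1) by (simp_all add: power2_eq_square)
  then have "(\<alpha> ^ 2) ^ L = (\<alpha> / \<beta>) ^ L * (\<alpha> * \<beta>) ^ L" "(\<alpha> * \<beta>) ^ L = (\<beta> ^ 2) ^ L * (\<alpha> / \<beta>) ^ L"
    by (simp_all only: power_mult_distrib)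
  then show "\<alpha> ^ (2 * L) = (\<alpha> * \<beta>) ^ L" "\<beta> ^ (2 * L) = (\<alpha> * \<beta>) ^ L"
    using assms(2) by (simp_all add: power_mult)
qed

lemma pgl_order_le_twice_lcm_elt_ord:
  fixes M :: "'a::alg_closed_field mat"
  assumes M: "M \<in> carrier_mat n n" and r: "of_nat (pgl_order M) \<noteq> (0 :: 'a)"
    and scalar: "k > 0" "M ^\<^sub>m k = c \<cdot>\<^sub>m 1\<^sub>m n"
    and ev: "\<And>\<gamma>. eigenvalue M \<gamma> \<longleftrightarrow> \<gamma> \<in> {\<alpha>1, \<beta>1, \<alpha>2, \<beta>2}"
    and prod: "\<alpha>1 * \<beta>1 = Q" "\<alpha>2 * \<beta>2 = Q" and "Q \<noteq> 0"
  shows "pgl_order M \<le> 2 * lcm (elt_ord (\<alpha>1 / \<beta>1)) (elt_ord (\<alpha>2 / \<beta>2))"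
proof -
  define L where "L = lcm (elt_ord (\<alpha>1 / \<beta>1)) (elt_ord (\<alpha>2 / \<beta>2))"
  have nz: "\<alpha>1 \<noteq> 0" "\<beta>1 \<noteq> 0" "\<alpha>2 \<noteq> 0" "\<beta>2 \<noteq> 0" using prod \<open>Q \<noteq> 0\<close> by auto
  have r_pos: "pgl_order M > 0" using pgl_order_pos_scalar[OF M scalar] by blast
  have eigen: "eigenvalue M \<alpha>1" "eigenvalue M \<beta>1" "eigenvalue M \<alpha>2" "eigenvalue M \<beta>2"
    using ev by simp_all
  have ratios: "(\<alpha>1 / \<beta>1) ^ pgl_order M = 1" "(\<alpha>2 / \<beta>2) ^ pgl_order M = 1"
    using eigenvalue_ratio_pow_pgl_order[OF M scalar] eigen nz by blast+
  have "L > 0"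
    unfolding L_def
    using elt_ord_pos_pow(1)[OF ratios(1) r_pos] elt_ord_pos_pow(1)[OF ratios(2) r_pos]
    by (simp add: lcm_pos_nat)
  have ratios_L: "(\<alpha>1 / \<beta>1) ^ L = 1" "(\<alpha>2 / \<beta>2) ^ L = 1"
    unfolding L_def pow_eq_1_iff_elt_ord_dvd[OF ratios(1) r_pos]
      pow_eq_1_iff_elt_ord_dvd[OF ratios(2) r_pos] by simp_all
  have pow_2L: "\<gamma> ^ (2 * L) = Q ^ L" if "eigenvalue M \<gamma>" for \<gamma>
  proof -
    from that have "\<gamma> = \<alpha>1 \<or> \<gamma> = \<beta>1 \<or> \<gamma> = \<alpha>2 \<or> \<gamma> = \<beta>2" using ev by simp
    then show ?thesis
      using double_power_eq_prod_power[OF nz(2) ratios_L(1)] double_power_eq_prod_power[OF nz(4) ratios_L(2)]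
      unfolding prod by (elim disjE) simp_all
  qed
  obtain \<kappa> where \<kappa>: "M ^\<^sub>m pgl_order M = \<kappa> \<cdot>\<^sub>m 1\<^sub>m n"
    using pgl_order_pos_scalar[OF M scalar] by blast
  moreover have "\<kappa> \<noteq> 0"
    using eigenvalue_pow_eq_if_mat_power_scalar[OF M \<kappa> eigen(1)] nz(1) by auto
  ultimately have "M ^\<^sub>m (2 * L) = Q ^ L \<cdot>\<^sub>m 1\<^sub>m n"
    using pow_2L by (rule mat_power_scalar_if_eigenvalue_powers[OF M r])
  then have "pgl_order M \<le> 2 * L" by (rule pgl_order_le[OF M, rotated]) (use \<open>L > 0\<close> in simp)
  then show ?thesis unfolding L_def .
qed

lemma dvd_le_twice_cases:
  fixes L r :: nat
  assumes "L dvd r" "r \<le> 2 * L" "r > 0"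
  shows "if odd r then L = r else L \<in> {r, r div 2}"
proof -
  obtain t where r: "r = L * t" using assms(1) by (elim dvdE)
  then have "t = 1 \<or> t = 2" using assms(2,3) by (cases "t \<ge> 3") (auto simp: mult_le_cancel1)
  then show ?thesis using r by auto
qed

lemma poly_frob_poly:
  "poly (map_poly of_int (frob_poly q a1 a2)) (x :: 'a::comm_ring_1) =
     of_int q ^ 2 + of_int a1 * of_int q * x + of_int a2 * x ^ 2 + of_int a1 * x ^ 3 + x ^ 4"
  by (simp add: frob_poly_def map_poly_pCons algebra_simps power2_eq_square power3_eq_cube
      power4_eq_xxxx)

lemma ratio_plus_inverse_plus_2:
  fixes \<alpha> \<beta> :: "'a::field"
  assumes "\<alpha> * \<beta> = Q" "Q \<noteq> 0"
  shows "(\<alpha> / \<beta> + inverse (\<alpha> / \<beta>) + 2) * Q = (\<alpha> + \<beta>) ^ 2"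
  using assms by (auto simp: field_simps power2_eq_square)

lemma alg_closed_quadratic_root: "\<exists>x::'a::alg_closed_field. x ^ 2 + b * x + c = 0"
proof -
  obtain x where "poly [:c, b, 1:] (x::'a) = 0"
    using alg_closed_imp_poly_has_root[of "[:c, b, 1:]"] by auto
  then show ?thesis by (auto simp: algebra_simps power2_eq_square)
qed

lemma frob_poly_splits:
  obtains \<alpha>1 \<beta>1 \<alpha>2 \<beta>2 :: "'a::alg_closed_field"
  where "\<alpha>1 * \<beta>1 = of_int q" "\<alpha>2 * \<beta>2 = of_int q"
    "of_int a1 = - ((\<alpha>1 + \<beta>1) + (\<alpha>2 + \<beta>2))"
    "of_int a2 - 2 * of_int q = (\<alpha>1 + \<beta>1) * (\<alpha>2 + \<beta>2)"
    "\<And>x. poly (map_poly of_int (frob_poly q a1 a2)) x = (x - \<alpha>1) * (x - \<beta>1) * (x - \<alpha>2) * (x - \<beta>2)"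
proof -
  define Q A1 A2
    where "Q = (of_int q :: 'a)" and "A1 = (of_int a1 :: 'a)" and "A2 = (of_int a2 :: 'a)"
  obtain s1 where s1: "s1 ^ 2 + A1 * s1 + (A2 - 2 * Q) = 0" using alg_closed_quadratic_root by blast
  define s2 where "s2 = - A1 - s1"
  obtain \<alpha>1 where \<alpha>1: "\<alpha>1 ^ 2 + (- s1) * \<alpha>1 + Q = 0" using alg_closed_quadratic_root by blast
  obtain \<alpha>2 where \<alpha>2: "\<alpha>2 ^ 2 + (- s2) * \<alpha>2 + Q = 0" using alg_closed_quadratic_root by blast
  define \<beta>1 \<beta>2 where "\<beta>1 = s1 - \<alpha>1" and "\<beta>2 = s2 - \<alpha>2"
  have prod: "\<alpha>1 * \<beta>1 = Q" "\<alpha>2 * \<beta>2 = Q"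
    using \<alpha>1 \<alpha>2 unfolding \<beta>1_def \<beta>2_def by (simp_all add: algebra_simps power2_eq_square)
  have sum: "A1 = - ((\<alpha>1 + \<beta>1) + (\<alpha>2 + \<beta>2))" unfolding \<beta>1_def \<beta>2_def s2_def by simp
  have sprod: "A2 - 2 * Q = (\<alpha>1 + \<beta>1) * (\<alpha>2 + \<beta>2)"
    using s1 unfolding \<beta>1_def \<beta>2_def s2_def by (simp add: algebra_simps power2_eq_square)
  from sprod have "A2 = (\<alpha>1 + \<beta>1) * (\<alpha>2 + \<beta>2) + 2 * Q" by (simp add: algebra_simps)
  have "poly (map_poly of_int (frob_poly q a1 a2)) x = (x - \<alpha>1) * (x - \<beta>1) * (x - \<alpha>2) * (x - \<beta>2)"
    for x :: 'a
  proof -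
    have "(x - \<alpha>1) * (x - \<beta>1) * (x - \<alpha>2) * (x - \<beta>2)
        = (x\<^sup>2 - (\<alpha>1 + \<beta>1) * x + \<alpha>1 * \<beta>1) * (x\<^sup>2 - (\<alpha>2 + \<beta>2) * x + \<alpha>2 * \<beta>2)"
      by (simp add: algebra_simps power2_eq_square)
    also have "\<dots> = Q ^ 2 + A1 * Q * x + A2 * x ^ 2 + A1 * x ^ 3 + x ^ 4"
      unfolding prod sum \<open>A2 = (\<alpha>1 + \<beta>1) * (\<alpha>2 + \<beta>2) + 2 * Q\<close>
      by (simp add: algebra_simps power2_eq_square power3_eq_cube power4_eq_xxxx)
    finally show ?thesis unfolding poly_frob_poly Q_def A1_def A2_def by simp
  qed
  then show ?thesis using that prod sum sprod unfolding Q_def A1_def A2_def by blast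
qed

lemma frobenius_trace_congruences:
  fixes \<alpha>1 \<beta>1 \<alpha>2 \<beta>2 Q A1 A2 :: "'a::alg_closed_field"
  assumes prod: "\<alpha>1 * \<beta>1 = Q" "\<alpha>2 * \<beta>2 = Q" and "Q \<noteq> 0"
    and sum: "A1 = - ((\<alpha>1 + \<beta>1) + (\<alpha>2 + \<beta>2))"
    and sprod: "A2 - 2 * Q = (\<alpha>1 + \<beta>1) * (\<alpha>2 + \<beta>2)"
  defines "\<eta>1 \<equiv> \<alpha>1 / \<beta>1 + inverse (\<alpha>1 / \<beta>1) + 2" and "\<eta>2 \<equiv> \<alpha>2 / \<beta>2 + inverse (\<alpha>2 / \<beta>2) + 2"
  shows "\<exists>u1 u2. u1 ^ 2 = \<eta>1 \<and> u2 ^ 2 = \<eta>2 \<and> A1 ^ 2 = (u1 + u2) ^ 2 * Q"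
    and "(A2 - 2 * Q) ^ 2 = \<eta>1 * \<eta>2 * Q ^ 2"
proof -
  have \<eta>: "\<eta>1 * Q = (\<alpha>1 + \<beta>1) ^ 2" "\<eta>2 * Q = (\<alpha>2 + \<beta>2) ^ 2"
    unfolding \<eta>1_def \<eta>2_def using ratio_plus_inverse_plus_2 prod \<open>Q \<noteq> 0\<close> by blast+
  obtain w where w: "w ^ 2 = Q" using nth_root_exists[of 2 Q] by auto
  with \<open>Q \<noteq> 0\<close> have "w \<noteq> 0" by auto
  show "\<exists>u1 u2. u1 ^ 2 = \<eta>1 \<and> u2 ^ 2 = \<eta>2 \<and> A1 ^ 2 = (u1 + u2) ^ 2 * Q"
  proof (intro exI conjI)
    show "((\<alpha>1 + \<beta>1) / w) ^ 2 = \<eta>1" "((\<alpha>2 + \<beta>2) / w) ^ 2 = \<eta>2"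
      using \<eta> w \<open>Q \<noteq> 0\<close> by (auto simp: power_divide field_simps)
    have "((\<alpha>1 + \<beta>1) / w + (\<alpha>2 + \<beta>2) / w) ^ 2 * Q = ((\<alpha>1 + \<beta>1) + (\<alpha>2 + \<beta>2)) ^ 2"
      using w \<open>Q \<noteq> 0\<close> by (simp add: add_divide_distrib[symmetric] power_divide)
    then show "A1 ^ 2 = ((\<alpha>1 + \<beta>1) / w + (\<alpha>2 + \<beta>2) / w) ^ 2 * Q" unfolding sum power2_minus by simp
  qed
  have "\<eta>1 * \<eta>2 * Q ^ 2 = (\<eta>1 * Q) * (\<eta>2 * Q)" by (simp add: power2_eq_square)
  also have "\<dots> = ((\<alpha>1 + \<beta>1) * (\<alpha>2 + \<beta>2)) ^ 2" unfolding \<eta> by (simp add: power_mult_distrib)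
  finally show "(A2 - 2 * Q) ^ 2 = \<eta>1 * \<eta>2 * Q ^ 2" unfolding sprod by simp
qed

lemma frob_char_poly_ratio_congruences:
  fixes M :: "'k::alg_closed_field mat"
  assumes M: "M \<in> carrier_mat n n"
    and char_M: "char_poly M = map_poly of_int (frob_poly q a1 a2)"
    and q: "(of_int q :: 'k) \<noteq> 0" and r: "(of_nat (pgl_order M) :: 'k) \<noteq> 0"
    and scalar: "d > 0" "M ^\<^sub>m d = c \<cdot>\<^sub>m 1\<^sub>m n"
  shows "\<exists>\<zeta>1 \<zeta>2 :: 'k. \<zeta>1 ^ pgl_order M = 1 \<and> \<zeta>2 ^ pgl_order M = 1 \<and>
    (if odd (pgl_order M) then lcm (elt_ord \<zeta>1) (elt_ord \<zeta>2) = pgl_order M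
     else lcm (elt_ord \<zeta>1) (elt_ord \<zeta>2) \<in> {pgl_order M, pgl_order M div 2}) \<and>
    (\<exists>u1 u2. u1 ^ 2 = \<zeta>1 + inverse \<zeta>1 + 2 \<and> u2 ^ 2 = \<zeta>2 + inverse \<zeta>2 + 2 \<and>
       of_int a1 ^ 2 = (u1 + u2) ^ 2 * of_int q) \<and>
    (of_int a2 - 2 * of_int q) ^ 2 = (\<zeta>1 + inverse \<zeta>1 + 2) * (\<zeta>2 + inverse \<zeta>2 + 2) * of_int q ^ 2"
proof -
  obtain \<alpha>1 \<beta>1 \<alpha>2 \<beta>2 :: 'k where roots:
    "\<alpha>1 * \<beta>1 = of_int q" "\<alpha>2 * \<beta>2 = of_int q"
    "of_int a1 = - ((\<alpha>1 + \<beta>1) + (\<alpha>2 + \<beta>2))"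
    "of_int a2 - 2 * of_int q = (\<alpha>1 + \<beta>1) * (\<alpha>2 + \<beta>2)"
    "\<And>x. poly (char_poly M) x = (x - \<alpha>1) * (x - \<beta>1) * (x - \<alpha>2) * (x - \<beta>2)"
    unfolding char_M by (fact frob_poly_splits)
  have ev: "eigenvalue M \<gamma> \<longleftrightarrow> \<gamma> \<in> {\<alpha>1, \<beta>1, \<alpha>2, \<beta>2}" for \<gamma>
    unfolding eigenvalue_root_char_poly[OF M] roots(5) by auto
  have eigen: "eigenvalue M \<alpha>1" "eigenvalue M \<beta>1" "eigenvalue M \<alpha>2" "eigenvalue M \<beta>2"
    using ev by simp_all
  have r_pos: "pgl_order M > 0" using pgl_order_pos_scalar[OF M scalar] by blast
  define \<zeta>1 \<zeta>2 where "\<zeta>1 = \<alpha>1 / \<beta>1" and "\<zeta>2 = \<alpha>2 / \<beta>2"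
  have "\<beta>1 \<noteq> 0" "\<beta>2 \<noteq> 0" using roots(1,2) q by auto
  then have \<zeta>: "\<zeta>1 ^ pgl_order M = 1" "\<zeta>2 ^ pgl_order M = 1"
    unfolding \<zeta>1_def \<zeta>2_def using eigenvalue_ratio_pow_pgl_order[OF M scalar] eigen by blast+
  have "lcm (elt_ord \<zeta>1) (elt_ord \<zeta>2) dvd pgl_order M"
    using \<zeta>
    by (simp add: pow_eq_1_iff_elt_ord_dvd[OF \<zeta>(1) r_pos] pow_eq_1_iff_elt_ord_dvd[OF \<zeta>(2) r_pos])
  moreover have "pgl_order M \<le> 2 * lcm (elt_ord \<zeta>1) (elt_ord \<zeta>2)"
    unfolding \<zeta>1_def \<zeta>2_def by (rule pgl_order_le_twice_lcm_elt_ord[OF M r scalar ev roots(1,2) q])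
  ultimately have "if odd (pgl_order M) then lcm (elt_ord \<zeta>1) (elt_ord \<zeta>2) = pgl_order M
      else lcm (elt_ord \<zeta>1) (elt_ord \<zeta>2) \<in> {pgl_order M, pgl_order M div 2}"
    using r_pos by (rule dvd_le_twice_cases)
  then show ?thesis
    using \<zeta> frobenius_trace_congruences[OF roots(1,2) q roots(3,4)] unfolding \<zeta>1_def \<zeta>2_def by blast
qed

theorem proposition2:
  fixes p n :: nat and a1 a2 :: int and l :: nat
    and F :: "'f::{field,finite} mat"
  assumes p_prime: "prime p" and n_pos: "n \<ge> 1"
    and weil: "\<And>z::complex. poly (map_poly of_int (frob_poly (int (p ^ n)) a1 a2)) z = 0
                 \<Longrightarrow> cmod z = sqrt (real (p ^ n))"
    and l_prime: "prime l" and l_ne_p: "l \<noteq> p"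
    and card_f: "card (UNIV :: 'f set) = l"
    and F_dim: "F \<in> carrier_mat 4 4"
    and F_charpoly: "char_poly F = map_poly of_int (frob_poly (int (p ^ n)) a1 a2)"
    and char_k: "CHAR('k) = l"
    and coprime_lr: "coprime l (pgl_order F)"
  shows "\<exists>\<zeta>1 \<zeta>2 :: 'k::alg_closed_field.
           \<zeta>1 ^ pgl_order F = 1 \<and> \<zeta>2 ^ pgl_order F = 1 \<and>
           (if odd (pgl_order F)
            then lcm (elt_ord \<zeta>1) (elt_ord \<zeta>2) = pgl_order F
            else lcm (elt_ord \<zeta>1) (elt_ord \<zeta>2) \<in> {pgl_order F, pgl_order F div 2}) \<and>
           (let \<eta>1 = \<zeta>1 + inverse \<zeta>1 + 2; \<eta>2 = \<zeta>2 + inverse \<zeta>2 + 2 in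
             (\<exists>u1 u2 :: 'k. u1 ^ 2 = \<eta>1 \<and> u2 ^ 2 = \<eta>2 \<and>
                 of_int (a1 ^ 2) = (u1 + u2) ^ 2 * of_nat (p ^ n)) \<and>
             of_int ((a2 - 2 * int (p ^ n)) ^ 2) = \<eta>1 * \<eta>2 * of_nat (p ^ n) ^ 2)"
proof -
  interpret emb: field_hom "prime_field_embedding :: 'f \<Rightarrow> 'k"
    by (rule field_hom_prime_field_embedding[OF l_prime card_f char_k])
  define M where "M = map_mat (prime_field_embedding :: 'f \<Rightarrow> 'k) F"
  have M: "M \<in> carrier_mat 4 4" using F_dim by (simp add: M_def)
  have char_M: "char_poly M = map_poly of_int (frob_poly (int (p ^ n)) a1 a2)"
    unfolding M_def emb.char_poly_hom[OF F_dim] F_charpoly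
    by (simp add: map_poly_map_poly comp_def emb.hom_of_int)
  have r_M: "pgl_order M = pgl_order F" unfolding M_def by (rule emb.pgl_order_map_mat[OF F_dim])
  then have r_k: "(of_nat (pgl_order M) :: 'k) \<noteq> 0"
    using coprime_lr l_prime char_k
    by (auto simp: of_nat_eq_0_iff_char_dvd prime_nat_iff coprime_absorb_left)
  have l_ndvd: "\<not> l dvd p ^ n"
    using l_prime p_prime l_ne_p prime_dvd_power primes_dvd_imp_eq by blast
  have q_k: "(of_int (int (p ^ n)) :: 'k) \<noteq> 0"
    unfolding of_int_of_nat_eq of_nat_eq_0_iff_char_dvd char_k by (rule l_ndvd)
  have "(of_nat (p ^ n) :: 'f) \<noteq> 0"
    unfolding of_nat_eq_0_iff_char_dvd CHAR_eq_card_prime[OF l_prime card_f] by (rule l_ndvd)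
  moreover have "poly (char_poly F) 0 = (of_nat (p ^ n)) ^ 2"
    unfolding F_charpoly poly_frob_poly by simp
  ultimately have "det F \<noteq> 0" using det_ne_0_if_char_poly_0_ne_0[OF F_dim] by simp
  then obtain d where d: "d > 0" "F ^\<^sub>m d = 1\<^sub>m 4" by (rule mat_power_eq_one_if_det_ne_0[OF F_dim])
  then have M_d: "M ^\<^sub>m d = 1 \<cdot>\<^sub>m 1\<^sub>m 4"
    unfolding M_def emb.mat_hom_pow[OF F_dim, symmetric] by auto
  show ?thesis
    using frob_char_poly_ratio_congruences[OF M char_M q_k r_k d(1) M_d]
    unfolding r_M Let_def by simp
qed

end
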